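(* Let $\alpha,\beta,\gamma>0$ with $\gamma^2-\alpha\beta>0$ and $n\ge2$. Then the pushforward $\mathrm{SH}_\#P_n$ of the signed Boltzmann measure $P_n$ on generalised snake configurations equals the Boltzmann measure $\mathbb{P}_n$ on six-vertex configurations on $\mathbb{T}_n$ with weights $$a_1=1,\quad a_2=\gamma^2-\alpha\beta,\quad b_1=\beta,\quad b_2=\alpha,\quad c_1=c_2=\gamma,$$ which satisfy $\triangle=\frac{a_1a_2+b_1b_2-c_1c_2}{2\sqrt{a_1a_2b_1b_2}}=0$. More precisely, for each pure snake configuration $\rho$, $\sum_{\bar\rho\in\mathrm{sh}^{-1}(\rho)}\bar w(\bar\rho)=w(\Phi^{-1}(\rho))$. Moreover, every Boltzmann measure on six-vertex configurations on $\mathbb{T}_n$ with positive weights satisfying $\triangle=0$ arises in this way for some such $\alpha,\beta,\gamma$.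
   Context: Six-vertex model on $\mathbb{T}_n=(\mathbb{Z}/n\mathbb{Z})^2$: orientations of edges with two in and two out at each vertex; vertex types (weights in brackets): type 1 ($a_1$): horizontal edges point right, vertical up; type 2 ($a_2$): horizontal left, vertical down; type 3 ($b_1$): horizontal right, vertical down; type 4 ($b_2$): horizontal left, vertical up; type 5 ($c_1$): horizontal edges into the vertex, vertical out; type 6 ($c_2$): horizontal out, vertical in. $w(\sigma)=\prod_v(\text{weight of type at }v)$, $\mathbb{P}_n(\sigma)=w(\sigma)/Z_n$. Snakes. $e^1=(1,0)$, $e^2=(0,1)$, $e^3=\frac12(e^1+e^2)$. Mid-edges $\mathbb{M}_n=\mathbb{M}_n^B\sqcup\mathbb{M}_n^W$, $\mathbb{M}_n^B=\{v+\frac12e^1:v\in\mathbb{T}_n\}$ (black), $\mathbb{M}_n^W=\{v+\frac12e^2:v\in\mathbb{T}_n\}$ (white), coordinates mod $n$. A generalised snake configuration is a permutation $\bar\rho$ of $\mathbb{M}_n$ with $\bar\rho(x)\in\{x,x+e^3,x+e^1\}$ for $x$ black and $\bar\rho(x)\in\{x,x+e^3,x+e^2\}$ for $x$ white; $\mathcal{GS}_n$ is the set of these. A crossing of $\bar\rho$ is a vertex $v$ with $\bar\rho(v-\frac12e^1)=v+\frac12e^1$ and $\bar\rho(v-\frac12e^2)=v+\frac12e^2$; $S(\bar\rho)$ is the number of crossings. Pure snake configurations ($\mathcal S_n$) are those with no crossings. $A(\bar\rho)=\#\{x:\bar\rho(x)=x+e^1\}$, $B(\bar\rho)=\#\{x:\bar\rho(x)=x+e^2\}$,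 $C(\bar\rho)=\#\{x:\bar\rho(x)=x+e^3\}$. Weight $\bar w(\bar\rho)=(-1)^{S(\bar\rho)}\alpha^{A(\bar\rho)}\beta^{B(\bar\rho)}\gamma^{C(\bar\rho)}$, $Z_n^{\mathcal{GS}}=\sum_{\bar\rho\in\mathcal{GS}_n}\bar w(\bar\rho)$, $P_n(\bar\rho)=\bar w(\bar\rho)/Z_n^{\mathcal{GS}}$ (a signed measure of total mass 1). The shape map $\mathrm{sh}:\mathcal{GS}_n\to\mathcal S_n$ replaces, at every crossing $v$, the values by $\rho(v-\frac12e^1)=v+\frac12e^2$, $\rho(v-\frac12e^2)=v+\frac12e^1$, leaving all else unchanged. The bijection $\Phi$ from six-vertex configurations to $\mathcal S_n$ is defined vertex by vertex: at $v$, with $W_v=v-\frac12e^1,S_v=v-\frac12e^2,E_v=v+\frac12e^1,N_v=v+\frac12e^2$: type 1: $\rho(W_v)=W_v,\rho(S_v)=S_v$; type 2: $\rho(W_v)=N_v,\rho(S_v)=E_v$; type 3: $\rho(W_v)=W_v,\rho(S_v)=N_v$; type 4: $\rho(W_v)=E_v,\rho(S_v)=S_v$; type 5: $\rho(W_v)=W_v,\rho(S_v)=E_v$; type 6: $\rho(W_v)=N_v,\rho(S_v)=S_v$. $\mathrm{SH}=\Phi^{-1}\circ\mathrm{sh}$, and for a signed measure $P$ on a finite set and surjection $\phi$, $(\phi_\#P)(e')=\sum_{e\in\phi^{-1}(e')}P(e)$. *)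

theory Defs
  imports Complex_Main
begin

definition tor :: "nat \<Rightarrow> (nat \<times> nat) set" where
  "tor n = {0..<n} \<times> {0..<n}"

definition plus1 :: "nat \<Rightarrow> nat \<times> nat \<Rightarrow> nat \<times> nat" where
  "plus1 n v = ((fst v + 1) mod n, snd v)"
definition plus2 :: "nat \<Rightarrow> nat \<times> nat \<Rightarrow> nat \<times> nat" where
  "plus2 n v = (fst v, (snd v + 1) mod n)"
definition minus1 :: "nat \<Rightarrow> nat \<times> nat \<Rightarrow> nat \<times> nat" where
  "minus1 n v = ((fst v + n - 1) mod n, snd v)"
definition minus2 :: "nat \<Rightarrow> nat \<times> nat \<Rightarrow> nat \<times> nat" where
  "minus2 n v = (fst v, (snd v + n - 1) mod n)"

text \<open>An orientation is a pair (H,V): H v is True iff the horizontal edge from v to v+e1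
  points right; V v is True iff the vertical edge from v to v+e2 points up.
  Values outside the torus are fixed to False (canonical representative).\<close>

type_synonym orient = "((nat \<times> nat) \<Rightarrow> bool) \<times> ((nat \<times> nat) \<Rightarrow> bool)"

text \<open>Vertex type 1..6 at v (0 = ice rule violated).\<close>
definition vtype :: "nat \<Rightarrow> orient \<Rightarrow> nat \<times> nat \<Rightarrow> nat" where
  "vtype n \<sigma> v = (let w = fst \<sigma> (minus1 n v); e = fst \<sigma> v;
                       s = snd \<sigma> (minus2 n v); nn = snd \<sigma> v in
     if w \<and> e \<and> s \<and> nn then 1
     else if \<not> w \<and> \<not> e \<and> \<not> s \<and> \<not> nn then 2
     else if w \<and> e \<and> \<not> s \<and> \<not> nn then 3
     else if \<not> w \<and> \<not> e \<and> s \<and> nn then 4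
     else if w \<and> \<not> e \<and> \<not> s \<and> nn then 5
     else if \<not> w \<and> e \<and> s \<and> \<not> nn then 6
     else 0)"

definition SV :: "nat \<Rightarrow> orient set" where
  "SV n = {\<sigma>. (\<forall>u. u \<notin> tor n \<longrightarrow> \<not> fst \<sigma> u \<and> \<not> snd \<sigma> u) \<and> (\<forall>v\<in>tor n. vtype n \<sigma> v \<noteq> 0)}"

definition typew :: "real \<Rightarrow> real \<Rightarrow> real \<Rightarrow> real \<Rightarrow> real \<Rightarrow> real \<Rightarrow> nat \<Rightarrow> real" where
  "typew a1 a2 b1 b2 c1 c2 k =
     (if k = 1 then a1 else if k = 2 then a2 else if k = 3 then b1 else if k = 4 then b2
      else if k = 5 then c1 else if k = 6 then c2 else 0)"

definition sv_weight :: "nat \<Rightarrow> real \<Rightarrow> real \<Rightarrow> real \<Rightarrow> real \<Rightarrow> real \<Rightarrow> real \<Rightarrow> orient \<Rightarrow> real" where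
  "sv_weight n a1 a2 b1 b2 c1 c2 \<sigma> = (\<Prod>v\<in>tor n. typew a1 a2 b1 b2 c1 c2 (vtype n \<sigma> v))"

definition sv_Z :: "nat \<Rightarrow> real \<Rightarrow> real \<Rightarrow> real \<Rightarrow> real \<Rightarrow> real \<Rightarrow> real \<Rightarrow> real" where
  "sv_Z n a1 a2 b1 b2 c1 c2 = (\<Sum>\<sigma>\<in>SV n. sv_weight n a1 a2 b1 b2 c1 c2 \<sigma>)"

definition sv_prob :: "nat \<Rightarrow> real \<Rightarrow> real \<Rightarrow> real \<Rightarrow> real \<Rightarrow> real \<Rightarrow> real \<Rightarrow> orient \<Rightarrow> real" where
  "sv_prob n a1 a2 b1 b2 c1 c2 \<sigma> = sv_weight n a1 a2 b1 b2 c1 c2 \<sigma> / sv_Z n a1 a2 b1 b2 c1 c2"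

definition Delta :: "real \<Rightarrow> real \<Rightarrow> real \<Rightarrow> real \<Rightarrow> real \<Rightarrow> real \<Rightarrow> real" where
  "Delta a1 a2 b1 b2 c1 c2 = (a1 * a2 + b1 * b2 - c1 * c2) / (2 * sqrt (a1 * a2 * b1 * b2))"

text \<open>Blk v = v + e1/2 (black), Wht v = v + e2/2 (white).\<close>
datatype mid = Blk "nat \<times> nat" | Wht "nat \<times> nat"

definition Mn :: "nat \<Rightarrow> mid set" where
  "Mn n = Blk ` tor n \<union> Wht ` tor n"

text \<open>Allowed targets: black x: x, x+e3, x+e1; white x: x, x+e3, x+e2.\<close>
fun allowed :: "nat \<Rightarrow> mid \<Rightarrow> mid set" where
  "allowed n (Blk u) = {Blk u, Wht (plus1 n u), Blk (plus1 n u)}"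
| "allowed n (Wht u) = {Wht u, Blk (plus2 n u), Wht (plus2 n u)}"

definition GS :: "nat \<Rightarrow> (mid \<Rightarrow> mid) set" where
  "GS n = {\<rho>. bij_betw \<rho> (Mn n) (Mn n) \<and> (\<forall>x. x \<notin> Mn n \<longrightarrow> \<rho> x = x)
             \<and> (\<forall>x\<in>Mn n. \<rho> x \<in> allowed n x)}"

definition crossing :: "nat \<Rightarrow> (mid \<Rightarrow> mid) \<Rightarrow> nat \<times> nat \<Rightarrow> bool" where
  "crossing n \<rho> v \<longleftrightarrow> \<rho> (Blk (minus1 n v)) = Blk v \<and> \<rho> (Wht (minus2 n v)) = Wht v"

definition Scount :: "nat \<Rightarrow> (mid \<Rightarrow> mid) \<Rightarrow> nat" where
  "Scount n \<rho> = card {v\<in>tor n. crossing n \<rho> v}"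

definition Snk :: "nat \<Rightarrow> (mid \<Rightarrow> mid) set" where
  "Snk n = {\<rho>\<in>GS n. Scount n \<rho> = 0}"

definition Acount :: "nat \<Rightarrow> (mid \<Rightarrow> mid) \<Rightarrow> nat" where
  "Acount n \<rho> = card {u\<in>tor n. \<rho> (Blk u) = Blk (plus1 n u)}"
definition Bcount :: "nat \<Rightarrow> (mid \<Rightarrow> mid) \<Rightarrow> nat" where
  "Bcount n \<rho> = card {u\<in>tor n. \<rho> (Wht u) = Wht (plus2 n u)}"
definition Ccount :: "nat \<Rightarrow> (mid \<Rightarrow> mid) \<Rightarrow> nat" where
  "Ccount n \<rho> = card {u\<in>tor n. \<rho> (Blk u) = Wht (plus1 n u)}
               + card {u\<in>tor n. \<rho> (Wht u) = Blk (plus2 n u)}"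

definition wbar :: "nat \<Rightarrow> real \<Rightarrow> real \<Rightarrow> real \<Rightarrow> (mid \<Rightarrow> mid) \<Rightarrow> real" where
  "wbar n \<alpha> \<beta> \<gamma> \<rho> = (-1) ^ Scount n \<rho> * \<alpha> ^ Acount n \<rho> * \<beta> ^ Bcount n \<rho> * \<gamma> ^ Ccount n \<rho>"

definition ZGS :: "nat \<Rightarrow> real \<Rightarrow> real \<Rightarrow> real \<Rightarrow> real" where
  "ZGS n \<alpha> \<beta> \<gamma> = (\<Sum>\<rho>\<in>GS n. wbar n \<alpha> \<beta> \<gamma> \<rho>)"

definition PGS :: "nat \<Rightarrow> real \<Rightarrow> real \<Rightarrow> real \<Rightarrow> (mid \<Rightarrow> mid) \<Rightarrow> real" where
  "PGS n \<alpha> \<beta> \<gamma> \<rho> = wbar n \<alpha> \<beta> \<gamma> \<rho> / ZGS n \<alpha> \<beta> \<gamma>"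

text \<open>Shape map: at each crossing v, W_v -> N_v and S_v -> E_v.\<close>
definition sh :: "nat \<Rightarrow> (mid \<Rightarrow> mid) \<Rightarrow> (mid \<Rightarrow> mid)" where
  "sh n \<rho> x = (if x \<notin> Mn n then x else
     (case x of
        Blk u \<Rightarrow> if crossing n \<rho> (plus1 n u) then Wht (plus1 n u) else \<rho> x
      | Wht u \<Rightarrow> if crossing n \<rho> (plus2 n u) then Blk (plus2 n u) else \<rho> x))"

text \<open>The map Phi from six-vertex configurations to snakes: a black mid-edge Blk u is W_v for
  v = u+e1, a white mid-edge Wht u is S_v for v = u+e2; N_v = Wht v, E_v = Blk v.\<close>
definition Phi :: "nat \<Rightarrow> orient \<Rightarrow> (mid \<Rightarrow> mid)" where
  "Phi n \<sigma> x = (if x \<notin> Mn n then x else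
     (case x of
        Blk u \<Rightarrow> (let v = plus1 n u; t = vtype n \<sigma> v in
                    if t \<in> {1, 3, 5} then x else if t \<in> {2, 6} then Wht v else Blk v)
      | Wht u \<Rightarrow> (let v = plus2 n u; t = vtype n \<sigma> v in
                    if t \<in> {1, 4, 6} then x else if t \<in> {2, 5} then Blk v else Wht v)))"

definition Phi_inv :: "nat \<Rightarrow> (mid \<Rightarrow> mid) \<Rightarrow> orient" where
  "Phi_inv n = inv_into (SV n) (Phi n)"

definition SH :: "nat \<Rightarrow> (mid \<Rightarrow> mid) \<Rightarrow> orient" where
  "SH n \<rho> = Phi_inv n (sh n \<rho>)"

end

theory Submission
  imports Defs
begin

text \<open>Read off the orientation of a generalised snake: a horizontal (vertical) edge points right
  (up) iff the snake fixes its black (white) mid-edge. This gives a map to six-vertex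
  configurations with Phi \<circ> orientation = sh, and its fibre over \<sigma> consists of Phi \<sigma> with an
  arbitrary set X of type-2 vertices turned into crossings. A crossing carries the weight -\<alpha>\<beta>
  whereas Phi \<sigma> carries \<gamma>^2 at a type-2 vertex, so the sum over X factorises into the six-vertex
  weight with a2 = \<gamma>^2 - \<alpha>\<beta>.
  Conversely, \<Delta> = 0 means a1 a2 + b1 b2 = c1 c2. On the torus there are as many vertices of
  type 5 as of type 6, so c1 and c2 may both be replaced by sqrt (c1 c2), and dividing all
  weights by a1 does not change the measure.\<close>

lemma mem_tor_iff [simp]: "(a, b) \<in> tor n \<longleftrightarrow> a < n \<and> b < n"
  by (simp add: tor_def)

lemma finite_tor [simp]: "finite (tor n)"
  by (simp add: tor_def)

lemma mod_Suc_pred_cancel: "a < (n::nat) \<Longrightarrow> ((a + 1) mod n + n - 1) mod n = a"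
  by (cases "a + 1 = n") auto

lemma mod_pred_Suc_cancel: "a < (n::nat) \<Longrightarrow> ((a + n - 1) mod n + 1) mod n = a"
  by (cases a) auto

lemma mod_Suc_neq:
  assumes "2 \<le> (n::nat)"
  shows "(a + 1) mod n \<noteq> a"
proof (cases "a + 1 < n")
  case False
  then consider "a + 1 = n" | "n \<le> a" by linarith
  then show ?thesis
  proof cases
    case 2
    have "(a + 1) mod n < n" using assms by simp
    with 2 show ?thesis by linarith
  qed (use assms in auto)
qed simp

locale torus =
  fixes n :: nat
  assumes two_le_n: "2 \<le> n"
begin

lemma plus1_in_tor [simp]: "u \<in> tor n \<Longrightarrow> plus1 n u \<in> tor n"
  using two_le_n by (cases u) (simp add: plus1_def)

lemma plus2_in_tor [simp]: "u \<in> tor n \<Longrightarrow> plus2 n u \<in> tor n"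
  using two_le_n by (cases u) (simp add: plus2_def)

lemma minus1_in_tor [simp]: "u \<in> tor n \<Longrightarrow> minus1 n u \<in> tor n"
  using two_le_n by (cases u) (simp add: minus1_def)

lemma minus2_in_tor [simp]: "u \<in> tor n \<Longrightarrow> minus2 n u \<in> tor n"
  using two_le_n by (cases u) (simp add: minus2_def)

lemma minus1_plus1 [simp]: "u \<in> tor n \<Longrightarrow> minus1 n (plus1 n u) = u"
  using mod_Suc_pred_cancel[of "fst u" n] by (cases u) (simp add: plus1_def minus1_def)

lemma plus1_minus1 [simp]: "u \<in> tor n \<Longrightarrow> plus1 n (minus1 n u) = u"
  using mod_pred_Suc_cancel[of "fst u" n] by (cases u) (simp add: plus1_def minus1_def)

lemma minus2_plus2 [simp]: "u \<in> tor n \<Longrightarrow> minus2 n (plus2 n u) = u"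
  using mod_Suc_pred_cancel[of "snd u" n] by (cases u) (simp add: plus2_def minus2_def)

lemma plus2_minus2 [simp]: "u \<in> tor n \<Longrightarrow> plus2 n (minus2 n u) = u"
  using mod_pred_Suc_cancel[of "snd u" n] by (cases u) (simp add: plus2_def minus2_def)

lemma plus1_neq [simp]: "plus1 n u \<noteq> u" "u \<noteq> plus1 n u"
  using mod_Suc_neq[OF two_le_n, of "fst u"] by (auto simp: plus1_def prod_eq_iff)

lemma plus2_neq [simp]: "plus2 n u \<noteq> u" "u \<noteq> plus2 n u"
  using mod_Suc_neq[OF two_le_n, of "snd u"] by (auto simp: plus2_def prod_eq_iff)

lemma minus1_neq [simp]: "u \<in> tor n \<Longrightarrow> minus1 n u \<noteq> u" "u \<in> tor n \<Longrightarrow> u \<noteq> minus1 n u"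
  by (metis plus1_minus1 plus1_neq(1))+

lemma minus2_neq [simp]: "u \<in> tor n \<Longrightarrow> minus2 n u \<noteq> u" "u \<in> tor n \<Longrightarrow> u \<noteq> minus2 n u"
  by (metis plus2_minus2 plus2_neq(1))+

lemma bij_betw_plus1: "bij_betw (plus1 n) (tor n) (tor n)"
  by (rule bij_betw_byWitness[where f'="minus1 n"]) auto

lemma bij_betw_plus2: "bij_betw (plus2 n) (tor n) (tor n)"
  by (rule bij_betw_byWitness[where f'="minus2 n"]) auto

lemma bij_betw_minus1: "bij_betw (minus1 n) (tor n) (tor n)"
  by (rule bij_betw_byWitness[where f'="plus1 n"]) auto

end

section \<open>Local structure of generalised snakes\<close>

lemma Mn_Blk_iff [simp]: "Blk u \<in> Mn n \<longleftrightarrow> u \<in> tor n"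
  by (auto simp: Mn_def)

lemma Mn_Wht_iff [simp]: "Wht u \<in> Mn n \<longleftrightarrow> u \<in> tor n"
  by (auto simp: Mn_def)

lemma finite_Mn [simp]: "finite (Mn n)"
  by (simp add: Mn_def)

lemma GS_allowedD: "\<rho> \<in> GS n \<Longrightarrow> x \<in> Mn n \<Longrightarrow> \<rho> x \<in> allowed n x"
  by (simp add: GS_def)

lemma GS_injD: "\<rho> \<in> GS n \<Longrightarrow> x \<in> Mn n \<Longrightarrow> y \<in> Mn n \<Longrightarrow> \<rho> x = \<rho> y \<Longrightarrow> x = y"
  by (auto simp: GS_def bij_betw_def inj_on_def)

lemma GS_surjD:
  assumes "\<rho> \<in> GS n" "y \<in> Mn n"
  shows "\<exists>x\<in>Mn n. \<rho> x = y"
proof -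
  have "y \<in> \<rho> ` Mn n" using assms by (simp add: GS_def bij_betw_def)
  then show ?thesis by blast
qed

lemma vtype_cases: "vtype n \<sigma> v \<in> {0, 1, 2, 3, 4, 5, 6}"
  by (simp add: vtype_def Let_def)

lemma vtype_west_iff: "vtype n \<sigma> v \<noteq> 0 \<Longrightarrow> vtype n \<sigma> v \<in> {1, 3, 5} \<longleftrightarrow> fst \<sigma> (minus1 n v)"
  by (auto simp: vtype_def Let_def split: if_splits)

lemma vtype_east_iff: "vtype n \<sigma> v \<noteq> 0 \<Longrightarrow> vtype n \<sigma> v \<in> {1, 3, 6} \<longleftrightarrow> fst \<sigma> v"
  by (auto simp: vtype_def Let_def split: if_splits)

lemma vtype_south_iff: "vtype n \<sigma> v \<noteq> 0 \<Longrightarrow> vtype n \<sigma> v \<in> {1, 4, 6} \<longleftrightarrow> snd \<sigma> (minus2 n v)"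
  by (auto simp: vtype_def Let_def split: if_splits)

lemma vtype_north_iff: "vtype n \<sigma> v \<noteq> 0 \<Longrightarrow> vtype n \<sigma> v \<in> {1, 4, 5} \<longleftrightarrow> snd \<sigma> v"
  by (auto simp: vtype_def Let_def split: if_splits)

lemma SV_vtype_nonzero: "\<sigma> \<in> SV n \<Longrightarrow> v \<in> tor n \<Longrightarrow> vtype n \<sigma> v \<noteq> 0"
  by (simp add: SV_def)

lemma SV_outside_tor: "\<sigma> \<in> SV n \<Longrightarrow> u \<notin> tor n \<Longrightarrow> \<not> fst \<sigma> u \<and> \<not> snd \<sigma> u"
  unfolding SV_def by blast

context torus
begin

lemma Mn_cases [consumes 1]:
  assumes "x \<in> Mn n"
  obtains v where "v \<in> tor n" "x = Blk (minus1 n v)"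
    | v where "v \<in> tor n" "x = Wht (minus2 n v)"
proof (cases x)
  case (Blk u)
  then show ?thesis using assms that(1)[of "plus1 n u"] by simp
next
  case (Wht u)
  then show ?thesis using assms that(2)[of "plus2 n u"] by simp
qed

lemma mid_fun_eqI:
  assumes "\<And>x. x \<notin> Mn n \<Longrightarrow> f x = g x"
    and "\<And>v. v \<in> tor n \<Longrightarrow> f (Blk (minus1 n v)) = g (Blk (minus1 n v))"
    and "\<And>v. v \<in> tor n \<Longrightarrow> f (Wht (minus2 n v)) = g (Wht (minus2 n v))"
  shows "f = g"
proof
  fix x
  show "f x = g x"
  proof (cases "x \<in> Mn n")
    case True
    then show ?thesis by (cases rule: Mn_cases) (use assms in auto)
  qed (use assms in auto)
qed

lemma allowed_subset_Mn: "x \<in> Mn n \<Longrightarrow> allowed n x \<subseteq> Mn n"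
  by (cases x) auto

lemma allowed_preimage_Blk:
  assumes "x \<in> Mn n" "v \<in> tor n" "Blk v \<in> allowed n x"
  shows "x \<in> {Blk v, Blk (minus1 n v), Wht (minus2 n v)}"
  using assms by (cases x) auto

lemma allowed_preimage_Wht:
  assumes "x \<in> Mn n" "v \<in> tor n" "Wht v \<in> allowed n x"
  shows "x \<in> {Wht v, Blk (minus1 n v), Wht (minus2 n v)}"
  using assms by (cases x) auto

text \<open>The seven local pictures of a generalised snake at a vertex: in this order, the images
  under Phi of the vertex types 1, 5, 3, 6, 2, 4, and a crossing.\<close>
lemma GS_local_cases:
  assumes r: "\<rho> \<in> GS n" and v: "v \<in> tor n"
  defines "W \<equiv> Blk (minus1 n v)" and "S \<equiv> Wht (minus2 n v)" and "E \<equiv> Blk v" and "N \<equiv> Wht v"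
  shows "(\<rho> W = W \<and> \<rho> S = S \<and> \<rho> E = E \<and> \<rho> N = N)
       \<or> (\<rho> W = W \<and> \<rho> S = E \<and> \<rho> E \<noteq> E \<and> \<rho> N = N)
       \<or> (\<rho> W = W \<and> \<rho> S = N \<and> \<rho> E = E \<and> \<rho> N \<noteq> N)
       \<or> (\<rho> W = N \<and> \<rho> S = S \<and> \<rho> E = E \<and> \<rho> N \<noteq> N)
       \<or> (\<rho> W = N \<and> \<rho> S = E \<and> \<rho> E \<noteq> E \<and> \<rho> N \<noteq> N)
       \<or> (\<rho> W = E \<and> \<rho> S = S \<and> \<rho> E \<noteq> E \<and> \<rho> N = N)
       \<or> (\<rho> W = E \<and> \<rho> S = N \<and> \<rho> E \<noteq> E \<and> \<rho> N \<noteq> N)"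
proof -
  have mem: "W \<in> Mn n" "S \<in> Mn n" "E \<in> Mn n" "N \<in> Mn n"
    using v by (auto simp: W_def S_def E_def N_def)
  have distinct: "W \<noteq> S" "W \<noteq> E" "W \<noteq> N" "S \<noteq> E" "S \<noteq> N" "E \<noteq> N"
    using v by (simp_all add: W_def S_def E_def N_def)
  have W_img: "\<rho> W = W \<or> \<rho> W = N \<or> \<rho> W = E"
    using GS_allowedD[OF r mem(1)] v by (auto simp: W_def N_def E_def)
  have S_img: "\<rho> S = S \<or> \<rho> S = E \<or> \<rho> S = N"
    using GS_allowedD[OF r mem(2)] v by (auto simp: S_def N_def E_def)
  have WS: "\<rho> W \<noteq> \<rho> S" using GS_injD[OF r mem(1,2)] distinct by blast
  have E_fixed: "\<rho> E = E \<longleftrightarrow> \<rho> W \<noteq> E \<and> \<rho> S \<noteq> E"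
  proof
    assume "\<rho> E = E"
    then show "\<rho> W \<noteq> E \<and> \<rho> S \<noteq> E"
      using GS_injD[OF r mem(1,3)] GS_injD[OF r mem(2,3)] distinct by metis
  next
    assume h: "\<rho> W \<noteq> E \<and> \<rho> S \<noteq> E"
    obtain x where x: "x \<in> Mn n" "\<rho> x = E" using GS_surjD[OF r mem(3)] by blast
    have "x \<in> {E, W, S}"
      using allowed_preimage_Blk[OF x(1) v] GS_allowedD[OF r x(1)] x(2)
      by (auto simp: E_def W_def S_def)
    then show "\<rho> E = E" using x h by auto
  qed
  have N_fixed: "\<rho> N = N \<longleftrightarrow> \<rho> W \<noteq> N \<and> \<rho> S \<noteq> N"
  proof
    assume "\<rho> N = N"
    then show "\<rho> W \<noteq> N \<and> \<rho> S \<noteq> N"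
      using GS_injD[OF r mem(1,4)] GS_injD[OF r mem(2,4)] distinct by metis
  next
    assume h: "\<rho> W \<noteq> N \<and> \<rho> S \<noteq> N"
    obtain x where x: "x \<in> Mn n" "\<rho> x = N" using GS_surjD[OF r mem(4)] by blast
    have "x \<in> {N, W, S}"
      using allowed_preimage_Wht[OF x(1) v] GS_allowedD[OF r x(1)] x(2)
      by (auto simp: N_def W_def S_def)
    then show "\<rho> N = N" using x h by auto
  qed
  show ?thesis using W_img S_img WS distinct E_fixed N_fixed by metis
qed

end

section \<open>The fibres of the shape map\<close>

definition snake_orientation :: "nat \<Rightarrow> (mid \<Rightarrow> mid) \<Rightarrow> orient" where
  "snake_orientation n \<rho> =
     (\<lambda>u. u \<in> tor n \<and> \<rho> (Blk u) = Blk u, \<lambda>u. u \<in> tor n \<and> \<rho> (Wht u) = Wht u)"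

context torus
begin

lemma Phi_west: "v \<in> tor n \<Longrightarrow> Phi n \<sigma> (Blk (minus1 n v)) =
   (if vtype n \<sigma> v \<in> {1, 3, 5} then Blk (minus1 n v)
    else if vtype n \<sigma> v \<in> {2, 6} then Wht v else Blk v)"
  by (simp add: Phi_def Let_def)

lemma Phi_south: "v \<in> tor n \<Longrightarrow> Phi n \<sigma> (Wht (minus2 n v)) =
   (if vtype n \<sigma> v \<in> {1, 4, 6} then Wht (minus2 n v)
    else if vtype n \<sigma> v \<in> {2, 5} then Blk v else Wht v)"
  by (simp add: Phi_def Let_def)

lemma sh_west: "v \<in> tor n \<Longrightarrow> sh n \<rho> (Blk (minus1 n v)) =
   (if crossing n \<rho> v then Wht v else \<rho> (Blk (minus1 n v)))"
  by (simp add: sh_def)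

lemma sh_south: "v \<in> tor n \<Longrightarrow> sh n \<rho> (Wht (minus2 n v)) =
   (if crossing n \<rho> v then Blk v else \<rho> (Wht (minus2 n v)))"
  by (simp add: sh_def)

lemma vtype_snake_orientation:
  assumes r: "\<rho> \<in> GS n" and v: "v \<in> tor n"
  shows "vtype n (snake_orientation n \<rho>) v =
    (if \<rho> (Blk (minus1 n v)) = Blk (minus1 n v) then
       (if \<rho> (Wht (minus2 n v)) = Wht (minus2 n v) then 1
        else if \<rho> (Wht (minus2 n v)) = Blk v then 5 else 3)
     else if \<rho> (Blk (minus1 n v)) = Wht v then
       (if \<rho> (Wht (minus2 n v)) = Wht (minus2 n v) then 6 else 2)
     else (if \<rho> (Wht (minus2 n v)) = Wht (minus2 n v) then 4 else 2))"
  using GS_local_cases[OF r v] v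
  by (elim disjE) (simp_all add: vtype_def snake_orientation_def Let_def)

lemma snake_orientation_in_SV: "\<rho> \<in> GS n \<Longrightarrow> snake_orientation n \<rho> \<in> SV n"
  unfolding SV_def by (auto simp: vtype_snake_orientation) (auto simp: snake_orientation_def)

lemma Phi_snake_orientation:
  assumes r: "\<rho> \<in> GS n"
  shows "Phi n (snake_orientation n \<rho>) = sh n \<rho>"
proof (rule mid_fun_eqI)
  fix v assume v: "v \<in> tor n"
  show "Phi n (snake_orientation n \<rho>) (Blk (minus1 n v)) = sh n \<rho> (Blk (minus1 n v))"
    unfolding Phi_west[OF v] sh_west[OF v] vtype_snake_orientation[OF r v]
    using GS_local_cases[OF r v] v by (elim disjE) (simp_all add: crossing_def)
  show "Phi n (snake_orientation n \<rho>) (Wht (minus2 n v)) = sh n \<rho> (Wht (minus2 n v))"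
    unfolding Phi_south[OF v] sh_south[OF v] vtype_snake_orientation[OF r v]
    using GS_local_cases[OF r v] v by (elim disjE) (simp_all add: crossing_def)
qed (simp add: Phi_def sh_def)

end

definition vertices_of_type :: "nat \<Rightarrow> orient \<Rightarrow> nat \<Rightarrow> (nat \<times> nat) set" where
  "vertices_of_type n \<sigma> k = {v \<in> tor n. vtype n \<sigma> v = k}"

definition crossing_set :: "nat \<Rightarrow> (mid \<Rightarrow> mid) \<Rightarrow> (nat \<times> nat) set" where
  "crossing_set n \<rho> = {v \<in> tor n. crossing n \<rho> v}"

text \<open>The snake Phi n \<sigma> with the vertices in X (meant to be of type 2) turned into crossings.\<close>
definition add_crossings :: "nat \<Rightarrow> orient \<Rightarrow> (nat \<times> nat) set \<Rightarrow> mid \<Rightarrow> mid" where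
  "add_crossings n \<sigma> X x = (if x \<notin> Mn n then x else
     (case x of Blk u \<Rightarrow> if plus1 n u \<in> X then Blk (plus1 n u) else Phi n \<sigma> x
              | Wht u \<Rightarrow> if plus2 n u \<in> X then Wht (plus2 n u) else Phi n \<sigma> x))"

lemma vertices_of_type_subset: "vertices_of_type n \<sigma> k \<subseteq> tor n"
  by (auto simp: vertices_of_type_def)

context torus
begin

lemma add_crossings_west: "v \<in> tor n \<Longrightarrow> add_crossings n \<sigma> X (Blk (minus1 n v)) =
   (if v \<in> X then Blk v else Phi n \<sigma> (Blk (minus1 n v)))"
  by (simp add: add_crossings_def)

lemma add_crossings_south: "v \<in> tor n \<Longrightarrow> add_crossings n \<sigma> X (Wht (minus2 n v)) =
   (if v \<in> X then Wht v else Phi n \<sigma> (Wht (minus2 n v)))"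
  by (simp add: add_crossings_def)

lemma add_crossings_empty: "add_crossings n \<sigma> {} = Phi n \<sigma>"
  by (rule mid_fun_eqI) (simp_all add: add_crossings_def Phi_def)

lemma crossing_add_crossings:
  assumes s: "\<sigma> \<in> SV n" and v: "v \<in> tor n"
  shows "crossing n (add_crossings n \<sigma> X) v \<longleftrightarrow> v \<in> X"
  unfolding crossing_def add_crossings_west[OF v] add_crossings_south[OF v]
    Phi_west[OF v] Phi_south[OF v]
  using v SV_vtype_nonzero[OF s v] vtype_cases[of n \<sigma> v] by auto

lemma crossing_set_add_crossings:
  "\<sigma> \<in> SV n \<Longrightarrow> X \<subseteq> tor n \<Longrightarrow> crossing_set n (add_crossings n \<sigma> X) = X"
  unfolding crossing_set_def using crossing_add_crossings by blast

lemma add_crossings_allowed: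
  assumes "x \<in> Mn n"
  shows "add_crossings n \<sigma> X x \<in> allowed n x"
  using assms by (cases rule: Mn_cases) (simp_all add: add_crossings_west add_crossings_south
    Phi_west Phi_south)

lemma Blk_in_image_add_crossings:
  assumes s: "\<sigma> \<in> SV n" and X: "X \<subseteq> vertices_of_type n \<sigma> 2" and v: "v \<in> tor n"
  shows "Blk v \<in> add_crossings n \<sigma> X ` Mn n"
proof (cases "fst \<sigma> v")
  case True
  define v' where "v' = plus1 n v"
  have v': "v' \<in> tor n" and vv: "v = minus1 n v'" using v by (auto simp: v'_def)
  have t: "vtype n \<sigma> v' \<in> {1, 3, 5}"
    using vtype_west_iff[OF SV_vtype_nonzero[OF s v']] True vv by simp
  then have "v' \<notin> X" using X by (auto simp: vertices_of_type_def)
  then have "add_crossings n \<sigma> X (Blk (minus1 n v')) = Blk v"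
    using add_crossings_west[OF v'] Phi_west[OF v'] t vv by simp
  then show ?thesis using v' by (metis Mn_Blk_iff minus1_in_tor image_eqI)
next
  case False
  have nz: "vtype n \<sigma> v \<noteq> 0" using SV_vtype_nonzero[OF s v] .
  then have t: "vtype n \<sigma> v \<notin> {1, 3, 6}" using vtype_east_iff False by simp
  have "add_crossings n \<sigma> X (Blk (minus1 n v)) = Blk v
      \<or> add_crossings n \<sigma> X (Wht (minus2 n v)) = Blk v"
    using add_crossings_west[OF v] Phi_west[OF v] add_crossings_south[OF v] Phi_south[OF v]
      t nz vtype_cases[of n \<sigma> v]
    by (cases "v \<in> X") auto
  then show ?thesis using v by (metis Mn_Blk_iff Mn_Wht_iff minus1_in_tor minus2_in_tor image_eqI)
qed

lemma Wht_in_image_add_crossings: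
  assumes s: "\<sigma> \<in> SV n" and X: "X \<subseteq> vertices_of_type n \<sigma> 2" and v: "v \<in> tor n"
  shows "Wht v \<in> add_crossings n \<sigma> X ` Mn n"
proof (cases "snd \<sigma> v")
  case True
  define v' where "v' = plus2 n v"
  have v': "v' \<in> tor n" and vv: "v = minus2 n v'" using v by (auto simp: v'_def)
  have t: "vtype n \<sigma> v' \<in> {1, 4, 6}"
    using vtype_south_iff[OF SV_vtype_nonzero[OF s v']] True vv by simp
  then have "v' \<notin> X" using X by (auto simp: vertices_of_type_def)
  then have "add_crossings n \<sigma> X (Wht (minus2 n v')) = Wht v"
    using add_crossings_south[OF v'] Phi_south[OF v'] t vv by simp
  then show ?thesis using v' by (metis Mn_Wht_iff minus2_in_tor image_eqI)
next
  case False
  have nz: "vtype n \<sigma> v \<noteq> 0" using SV_vtype_nonzero[OF s v] .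
  then have t: "vtype n \<sigma> v \<notin> {1, 4, 5}" using vtype_north_iff False by simp
  have "add_crossings n \<sigma> X (Blk (minus1 n v)) = Wht v
      \<or> add_crossings n \<sigma> X (Wht (minus2 n v)) = Wht v"
    using add_crossings_west[OF v] Phi_west[OF v] add_crossings_south[OF v] Phi_south[OF v]
      t nz vtype_cases[of n \<sigma> v]
    by (cases "v \<in> X") auto
  then show ?thesis using v by (metis Mn_Blk_iff Mn_Wht_iff minus1_in_tor minus2_in_tor image_eqI)
qed

lemma add_crossings_in_GS:
  assumes s: "\<sigma> \<in> SV n" and X: "X \<subseteq> vertices_of_type n \<sigma> 2"
  shows "add_crossings n \<sigma> X \<in> GS n"
proof -
  have "add_crossings n \<sigma> X ` Mn n \<subseteq> Mn n"
    using add_crossings_allowed allowed_subset_Mn by blast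
  moreover have surj: "Mn n \<subseteq> add_crossings n \<sigma> X ` Mn n"
    using Blk_in_image_add_crossings[OF s X] Wht_in_image_add_crossings[OF s X]
    by (auto simp: Mn_def)
  ultimately have "bij_betw (add_crossings n \<sigma> X) (Mn n) (Mn n)"
    unfolding bij_betw_def using finite_surj_inj[OF finite_Mn surj] by blast
  then show ?thesis
    unfolding GS_def using add_crossings_allowed by (simp add: add_crossings_def)
qed

lemma snake_orientation_add_crossings:
  assumes s: "\<sigma> \<in> SV n" and X: "X \<subseteq> vertices_of_type n \<sigma> 2"
  shows "snake_orientation n (add_crossings n \<sigma> X) = \<sigma>"
proof -
  have X_type: "vtype n \<sigma> v = 2" if "v \<in> X" for v
    using that X by (auto simp: vertices_of_type_def)
  have right: "fst \<sigma> (minus1 n v) \<longleftrightarrow>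
      add_crossings n \<sigma> X (Blk (minus1 n v)) = Blk (minus1 n v)" if v: "v \<in> tor n" for v
    using vtype_west_iff[OF SV_vtype_nonzero[OF s v]] v X_type[of v]
    by (auto simp: add_crossings_west Phi_west)
  have up: "snd \<sigma> (minus2 n v) \<longleftrightarrow>
      add_crossings n \<sigma> X (Wht (minus2 n v)) = Wht (minus2 n v)" if v: "v \<in> tor n" for v
    using vtype_south_iff[OF SV_vtype_nonzero[OF s v]] v X_type[of v]
    by (auto simp: add_crossings_south Phi_south)
  have "fst \<sigma> u = (u \<in> tor n \<and> add_crossings n \<sigma> X (Blk u) = Blk u)" for u
    using SV_outside_tor[OF s, of u] right[of "plus1 n u"] by (cases "u \<in> tor n") auto
  moreover have "snd \<sigma> u = (u \<in> tor n \<and> add_crossings n \<sigma> X (Wht u) = Wht u)" for u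
    using SV_outside_tor[OF s, of u] up[of "plus2 n u"] by (cases "u \<in> tor n") auto
  ultimately show ?thesis
    unfolding snake_orientation_def by (simp add: prod_eq_iff fun_eq_iff)
qed

lemma crossing_set_subset_type2:
  assumes r: "\<rho> \<in> GS n"
  shows "crossing_set n \<rho> \<subseteq> vertices_of_type n (snake_orientation n \<rho>) 2"
  using vtype_snake_orientation[OF r]
  by (auto simp: crossing_set_def vertices_of_type_def crossing_def)

lemma add_crossings_crossing_set:
  assumes r: "\<rho> \<in> GS n"
  shows "add_crossings n (snake_orientation n \<rho>) (crossing_set n \<rho>) = \<rho>"
proof (rule mid_fun_eqI)
  fix v assume v: "v \<in> tor n"
  have "Phi n (snake_orientation n \<rho>) = sh n \<rho>" by (rule Phi_snake_orientation[OF r])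
  then show "add_crossings n (snake_orientation n \<rho>) (crossing_set n \<rho>) (Blk (minus1 n v))
        = \<rho> (Blk (minus1 n v))"
    and "add_crossings n (snake_orientation n \<rho>) (crossing_set n \<rho>) (Wht (minus2 n v))
        = \<rho> (Wht (minus2 n v))"
    using v by (auto simp: add_crossings_west add_crossings_south sh_west sh_south
      crossing_set_def crossing_def)
qed (use r in \<open>simp add: add_crossings_def GS_def\<close>)

lemma fiber_snake_orientation:
  assumes s: "\<sigma> \<in> SV n"
  shows "{\<rho> \<in> GS n. snake_orientation n \<rho> = \<sigma>}
    = add_crossings n \<sigma> ` Pow (vertices_of_type n \<sigma> 2)"
proof
  show "{\<rho> \<in> GS n. snake_orientation n \<rho> = \<sigma>} \<subseteq> add_crossings n \<sigma> ` Pow (vertices_of_type n \<sigma> 2)"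
    using add_crossings_crossing_set crossing_set_subset_type2 by (blast intro: sym)
  show "add_crossings n \<sigma> ` Pow (vertices_of_type n \<sigma> 2) \<subseteq> {\<rho> \<in> GS n. snake_orientation n \<rho> = \<sigma>}"
    using add_crossings_in_GS[OF s] snake_orientation_add_crossings[OF s] by auto
qed

lemma inj_on_add_crossings:
  "\<sigma> \<in> SV n \<Longrightarrow> inj_on (add_crossings n \<sigma>) (Pow (vertices_of_type n \<sigma> 2))"
  by (rule inj_onI) (metis PowD crossing_set_add_crossings vertices_of_type_subset order_trans)

end

section \<open>Summing the signed weights over a fibre\<close>

lemma power_card_filter:
  "finite A \<Longrightarrow> (c::'a::comm_monoid_mult) ^ card {x \<in> A. P x} = (\<Prod>x\<in>A. if P x then c else 1)"
  by (simp add: prod.inter_filter[symmetric])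

lemma sum_Pow_prod_if:
  fixes f g :: "'a \<Rightarrow> 'b::comm_semiring_1"
  assumes B: "finite B" and AB: "A \<subseteq> B"
  shows "(\<Sum>X\<in>Pow A. \<Prod>v\<in>B. if v \<in> X then f v else g v)
    = (\<Prod>v\<in>B. if v \<in> A then f v + g v else g v)"
proof -
  have A: "finite A" using B AB by (rule finite_subset[rotated])
  have split: "(\<Prod>v\<in>B. if v \<in> X then f v else g v)
      = (\<Prod>v\<in>X. f v) * (\<Prod>v\<in>A - X. g v) * (\<Prod>v\<in>B - A. g v)" if X: "X \<subseteq> A" for X
  proof -
    have "B \<inter> - X = (A - X) \<union> (B - A)" and "B \<inter> {v. v \<in> X} = X" using X AB by auto
    then show ?thesis
      using B A by (simp add: prod.If_cases prod.union_disjoint Diff_Int_distrib2 mult.assoc)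
  qed
  have "(\<Prod>v\<in>B. if v \<in> A then f v + g v else g v) = (\<Prod>v\<in>A. f v + g v) * (\<Prod>v\<in>B - A. g v)"
    using B AB by (simp add: prod.If_cases Int_absorb1 Diff_eq)
  also have "\<dots> = (\<Sum>X\<in>Pow A. (\<Prod>v\<in>X. f v) * (\<Prod>v\<in>A - X. g v) * (\<Prod>v\<in>B - A. g v))"
    by (simp add: prod_add[OF A] sum_distrib_right)
  finally show ?thesis using split by simp
qed

text \<open>The factor of wbar charged to the vertex v: its crossing sign and the steps leaving
  W_v and S_v.\<close>
definition local_wbar :: "nat \<Rightarrow> real \<Rightarrow> real \<Rightarrow> real \<Rightarrow> (mid \<Rightarrow> mid) \<Rightarrow> nat \<times> nat \<Rightarrow> real" where
  "local_wbar n \<alpha> \<beta> \<gamma> \<rho> v = (if crossing n \<rho> v then -1 else 1)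
     * (if \<rho> (Blk (minus1 n v)) = Blk v then \<alpha> else 1)
     * (if \<rho> (Wht (minus2 n v)) = Wht v then \<beta> else 1)
     * (if \<rho> (Blk (minus1 n v)) = Wht v then \<gamma> else 1)
     * (if \<rho> (Wht (minus2 n v)) = Blk v then \<gamma> else 1)"

context torus
begin

lemma power_card_plus1:
  "(c::'a::comm_monoid_mult) ^ card {u \<in> tor n. P u (plus1 n u)}
    = (\<Prod>v\<in>tor n. if P (minus1 n v) v then c else 1)"
proof -
  have "c ^ card {u \<in> tor n. P u (plus1 n u)}
      = (\<Prod>u\<in>tor n. (\<lambda>v. if P (minus1 n v) v then c else 1) (plus1 n u))"
    by (simp add: power_card_filter)
  also have "\<dots> = (\<Prod>v\<in>tor n. if P (minus1 n v) v then c else 1)"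
    by (rule prod.reindex_bij_betw[OF bij_betw_plus1])
  finally show ?thesis .
qed

lemma power_card_plus2:
  "(c::'a::comm_monoid_mult) ^ card {u \<in> tor n. P u (plus2 n u)}
    = (\<Prod>v\<in>tor n. if P (minus2 n v) v then c else 1)"
proof -
  have "c ^ card {u \<in> tor n. P u (plus2 n u)}
      = (\<Prod>u\<in>tor n. (\<lambda>v. if P (minus2 n v) v then c else 1) (plus2 n u))"
    by (simp add: power_card_filter)
  also have "\<dots> = (\<Prod>v\<in>tor n. if P (minus2 n v) v then c else 1)"
    by (rule prod.reindex_bij_betw[OF bij_betw_plus2])
  finally show ?thesis .
qed

lemma wbar_eq_prod_local_wbar: "wbar n \<alpha> \<beta> \<gamma> \<rho> = (\<Prod>v\<in>tor n. local_wbar n \<alpha> \<beta> \<gamma> \<rho> v)"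
proof -
  have "wbar n \<alpha> \<beta> \<gamma> \<rho> = (-1) ^ Scount n \<rho> * \<alpha> ^ Acount n \<rho> * \<beta> ^ Bcount n \<rho>
      * \<gamma> ^ card {u \<in> tor n. \<rho> (Blk u) = Wht (plus1 n u)}
      * \<gamma> ^ card {u \<in> tor n. \<rho> (Wht u) = Blk (plus2 n u)}"
    by (simp add: wbar_def Ccount_def power_add mult_ac)
  also have "\<dots> = (\<Prod>v\<in>tor n. local_wbar n \<alpha> \<beta> \<gamma> \<rho> v)"
    unfolding Acount_def Bcount_def
      power_card_plus1[of _ "\<lambda>u v. \<rho> (Blk u) = Blk v"]
      power_card_plus1[of _ "\<lambda>u v. \<rho> (Blk u) = Wht v"]
      power_card_plus2[of _ "\<lambda>u v. \<rho> (Wht u) = Wht v"]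
      power_card_plus2[of _ "\<lambda>u v. \<rho> (Wht u) = Blk v"]
    unfolding Scount_def power_card_filter[OF finite_tor] local_wbar_def
    by (simp add: prod.distrib)
  finally show ?thesis .
qed

text \<open>A crossing contributes -\<alpha>\<beta>, while at a type-2 vertex Phi n \<sigma> takes two diagonal
  steps, contributing \<gamma>^2.\<close>
lemma local_wbar_add_crossings:
  assumes s: "\<sigma> \<in> SV n" and v: "v \<in> tor n"
  shows "local_wbar n \<alpha> \<beta> \<gamma> (add_crossings n \<sigma> X) v
    = (if v \<in> X then -(\<alpha> * \<beta>) else typew 1 (\<gamma>^2) \<beta> \<alpha> \<gamma> \<gamma> (vtype n \<sigma> v))"
  unfolding local_wbar_def crossing_add_crossings[OF s v] add_crossings_west[OF v]
    add_crossings_south[OF v] Phi_west[OF v] Phi_south[OF v]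
  using v SV_vtype_nonzero[OF s v] vtype_cases[of n \<sigma> v]
  by (cases "v \<in> X") (auto simp: typew_def power2_eq_square)

lemma sum_wbar_fiber:
  assumes s: "\<sigma> \<in> SV n"
  shows "(\<Sum>\<rho>\<in>{\<rho> \<in> GS n. snake_orientation n \<rho> = \<sigma>}. wbar n \<alpha> \<beta> \<gamma> \<rho>)
    = sv_weight n 1 (\<gamma>^2 - \<alpha> * \<beta>) \<beta> \<alpha> \<gamma> \<gamma> \<sigma>"
proof -
  let ?T = "vertices_of_type n \<sigma> 2"
  let ?w = "\<lambda>v. typew 1 (\<gamma>^2) \<beta> \<alpha> \<gamma> \<gamma> (vtype n \<sigma> v)"
  have "(\<Sum>\<rho>\<in>{\<rho> \<in> GS n. snake_orientation n \<rho> = \<sigma>}. wbar n \<alpha> \<beta> \<gamma> \<rho>)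
      = (\<Sum>X\<in>Pow ?T. wbar n \<alpha> \<beta> \<gamma> (add_crossings n \<sigma> X))"
    unfolding fiber_snake_orientation[OF s]
    by (rule sum.reindex[OF inj_on_add_crossings[OF s], unfolded comp_def])
  also have "\<dots> = (\<Sum>X\<in>Pow ?T. \<Prod>v\<in>tor n. if v \<in> X then -(\<alpha> * \<beta>) else ?w v)"
    unfolding wbar_eq_prod_local_wbar
    by (intro sum.cong refl prod.cong) (auto simp: local_wbar_add_crossings[OF s])
  also have "\<dots> = (\<Prod>v\<in>tor n. if v \<in> ?T then -(\<alpha> * \<beta>) + ?w v else ?w v)"
    by (rule sum_Pow_prod_if[OF finite_tor vertices_of_type_subset])
  also have "\<dots> = sv_weight n 1 (\<gamma>^2 - \<alpha> * \<beta>) \<beta> \<alpha> \<gamma> \<gamma> \<sigma>"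
    unfolding sv_weight_def by (intro prod.cong refl) (auto simp: vertices_of_type_def typew_def)
  finally show ?thesis .
qed

end

lemma finite_SV: "finite (SV n)"
proof -
  let ?ori = "\<lambda>(A, B). (\<lambda>u. u \<in> A, \<lambda>u. u \<in> B) :: orient"
  have "SV n \<subseteq> ?ori ` (Pow (tor n) \<times> Pow (tor n))"
  proof
    fix \<sigma> assume s: "\<sigma> \<in> SV n"
    have "\<sigma> = ?ori ({u. fst \<sigma> u}, {u. snd \<sigma> u})" by simp
    moreover have "({u. fst \<sigma> u}, {u. snd \<sigma> u}) \<in> Pow (tor n) \<times> Pow (tor n)"
      using SV_outside_tor[OF s] by blast
    ultimately show "\<sigma> \<in> ?ori ` (Pow (tor n) \<times> Pow (tor n))" by (rule image_eqI)
  qed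
  then show ?thesis by (rule finite_subset) simp
qed

context torus
begin

lemma finite_GS: "finite (GS n)"
proof -
  have "GS n = (\<Union>\<sigma>\<in>SV n. {\<rho> \<in> GS n. snake_orientation n \<rho> = \<sigma>})"
    using snake_orientation_in_SV by blast
  also have "finite \<dots>"
    using finite_SV by (simp add: fiber_snake_orientation finite_subset[OF vertices_of_type_subset])
  finally show ?thesis .
qed

lemma ZGS_eq_sv_Z: "ZGS n \<alpha> \<beta> \<gamma> = sv_Z n 1 (\<gamma>^2 - \<alpha> * \<beta>) \<beta> \<alpha> \<gamma> \<gamma>"
proof -
  have "ZGS n \<alpha> \<beta> \<gamma> = (\<Sum>\<sigma>\<in>SV n. \<Sum>\<rho>\<in>{\<rho> \<in> GS n. snake_orientation n \<rho> = \<sigma>}. wbar n \<alpha> \<beta> \<gamma> \<rho>)"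
    unfolding ZGS_def
    by (rule sum.group[OF finite_GS finite_SV, symmetric]) (use snake_orientation_in_SV in blast)
  also have "\<dots> = sv_Z n 1 (\<gamma>^2 - \<alpha> * \<beta>) \<beta> \<alpha> \<gamma> \<gamma>"
    unfolding sv_Z_def by (intro sum.cong refl) (simp add: sum_wbar_fiber)
  finally show ?thesis .
qed

lemma snake_orientation_Phi: "\<sigma> \<in> SV n \<Longrightarrow> snake_orientation n (Phi n \<sigma>) = \<sigma>"
  using snake_orientation_add_crossings[of \<sigma> "{}"] by (simp add: add_crossings_empty)

lemma inj_on_Phi: "inj_on (Phi n) (SV n)"
  by (rule inj_on_inverseI[where g="snake_orientation n"]) (rule snake_orientation_Phi)

lemma Phi_snake_orientation_Snk:
  assumes r: "\<rho> \<in> Snk n"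
  shows "Phi n (snake_orientation n \<rho>) = \<rho>"
proof -
  have g: "\<rho> \<in> GS n" and "crossing_set n \<rho> = {}"
    using r by (simp_all add: Snk_def Scount_def crossing_set_def)
  then show ?thesis using add_crossings_crossing_set[OF g] by (simp add: add_crossings_empty)
qed

lemma Phi_inv_Snk: "\<rho> \<in> Snk n \<Longrightarrow> Phi_inv n \<rho> = snake_orientation n \<rho>"
  unfolding Phi_inv_def
  by (rule inv_into_f_eq[OF inj_on_Phi snake_orientation_in_SV Phi_snake_orientation_Snk])
    (simp add: Snk_def)

lemma SH_eq_snake_orientation: "\<rho> \<in> GS n \<Longrightarrow> SH n \<rho> = snake_orientation n \<rho>"
  unfolding SH_def Phi_inv_def Phi_snake_orientation[symmetric]
  by (rule inv_into_f_f[OF inj_on_Phi snake_orientation_in_SV])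

lemma sum_wbar_sh_fiber:
  assumes r: "\<rho> \<in> Snk n"
  shows "(\<Sum>\<rho>b\<in>{\<rho>b \<in> GS n. sh n \<rho>b = \<rho>}. wbar n \<alpha> \<beta> \<gamma> \<rho>b)
       = sv_weight n 1 (\<gamma>^2 - \<alpha> * \<beta>) \<beta> \<alpha> \<gamma> \<gamma> (Phi_inv n \<rho>)"
proof -
  have g: "\<rho> \<in> GS n" using r by (simp add: Snk_def)
  have "sh n \<rho>b = \<rho> \<longleftrightarrow> snake_orientation n \<rho>b = snake_orientation n \<rho>" if b: "\<rho>b \<in> GS n" for \<rho>b
  proof -
    have "sh n \<rho>b = \<rho> \<longleftrightarrow> Phi n (snake_orientation n \<rho>b) = Phi n (snake_orientation n \<rho>)"
      using Phi_snake_orientation[OF b] Phi_snake_orientation_Snk[OF r] by simp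
    also have "\<dots> \<longleftrightarrow> snake_orientation n \<rho>b = snake_orientation n \<rho>"
      using inj_on_Phi snake_orientation_in_SV[OF b] snake_orientation_in_SV[OF g]
      by (auto dest: inj_onD)
    finally show ?thesis .
  qed
  then have "{\<rho>b \<in> GS n. sh n \<rho>b = \<rho>} = {\<rho>b \<in> GS n. snake_orientation n \<rho>b = snake_orientation n \<rho>}"
    by blast
  then show ?thesis
    using sum_wbar_fiber[OF snake_orientation_in_SV[OF g]] Phi_inv_Snk[OF r] by simp
qed

lemma sum_PGS_SH_fiber:
  assumes s: "\<sigma> \<in> SV n"
  shows "(\<Sum>\<rho>b\<in>{\<rho>b \<in> GS n. SH n \<rho>b = \<sigma>}. PGS n \<alpha> \<beta> \<gamma> \<rho>b)
       = sv_prob n 1 (\<gamma>^2 - \<alpha> * \<beta>) \<beta> \<alpha> \<gamma> \<gamma> \<sigma>"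
proof -
  have "{\<rho>b \<in> GS n. SH n \<rho>b = \<sigma>} = {\<rho>b \<in> GS n. snake_orientation n \<rho>b = \<sigma>}"
    by (auto simp: SH_eq_snake_orientation)
  then show ?thesis
    unfolding PGS_def sv_prob_def
    by (simp add: sum_divide_distrib[symmetric] sum_wbar_fiber[OF s] ZGS_eq_sv_Z)
qed

end

section \<open>Six-vertex weights with vanishing Delta\<close>

lemma Delta_snake_weights: "Delta 1 (\<gamma>^2 - \<alpha> * \<beta>) \<beta> \<alpha> \<gamma> \<gamma> = 0"
  by (simp add: Delta_def power2_eq_square)

lemma sv_weight_factor_c:
  "sv_weight n a1 a2 b1 b2 c1 c2 \<sigma> = sv_weight n a1 a2 b1 b2 1 1 \<sigma>
     * c1 ^ card (vertices_of_type n \<sigma> 5) * c2 ^ card (vertices_of_type n \<sigma> 6)"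
proof -
  have "typew a1 a2 b1 b2 c1 c2 t
      = typew a1 a2 b1 b2 1 1 t * (if t = 5 then c1 else 1) * (if t = 6 then c2 else 1)" for t
    by (simp add: typew_def)
  then show ?thesis
    unfolding sv_weight_def vertices_of_type_def
    by (simp add: prod.distrib power_card_filter)
qed

lemma sv_weight_scale:
  assumes "a1 \<noteq> 0"
  shows "sv_weight n a1 a2 b1 b2 c c \<sigma>
    = a1 ^ card (tor n) * sv_weight n 1 (a2 / a1) (b1 / a1) (b2 / a1) (c / a1) (c / a1) \<sigma>"
proof -
  have "typew a1 a2 b1 b2 c c t = a1 * typew 1 (a2 / a1) (b1 / a1) (b2 / a1) (c / a1) (c / a1) t" for t
    using assms by (simp add: typew_def)
  then show ?thesis unfolding sv_weight_def by (simp add: prod.distrib)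
qed

context torus
begin

text \<open>The orientations of the horizontal edges telescope around the torus, and the east edge of v
  is oriented differently from its west edge exactly when v has type 5 or 6.\<close>
lemma card_type5_eq_card_type6:
  assumes s: "\<sigma> \<in> SV n"
  shows "card (vertices_of_type n \<sigma> 5) = card (vertices_of_type n \<sigma> 6)"
proof -
  have change: "(of_bool (fst \<sigma> v) :: int) - of_bool (fst \<sigma> (minus1 n v))
      = of_bool (vtype n \<sigma> v = 6) - of_bool (vtype n \<sigma> v = 5)" if v: "v \<in> tor n" for v
    using vtype_east_iff[OF SV_vtype_nonzero[OF s v]] vtype_west_iff[OF SV_vtype_nonzero[OF s v]]
      vtype_cases[of n \<sigma> v]
    by auto
  have "(\<Sum>v\<in>tor n. (of_bool (fst \<sigma> (minus1 n v)) :: int)) = (\<Sum>v\<in>tor n. of_bool (fst \<sigma> v))"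
    by (rule sum.reindex_bij_betw[OF bij_betw_minus1])
  then have "0 = (\<Sum>v\<in>tor n. (of_bool (fst \<sigma> v) :: int) - of_bool (fst \<sigma> (minus1 n v)))"
    by (simp add: sum_subtractf)
  also have "\<dots> = (\<Sum>v\<in>tor n. of_bool (vtype n \<sigma> v = 6) - of_bool (vtype n \<sigma> v = 5))"
    by (rule sum.cong) (simp_all add: change)
  also have "\<dots> = int (card (vertices_of_type n \<sigma> 6)) - int (card (vertices_of_type n \<sigma> 5))"
    by (simp add: sum_subtractf vertices_of_type_def Int_def)
  finally show ?thesis by simp
qed

lemma sv_weight_c_geometric_mean:
  assumes "\<sigma> \<in> SV n" and "c * c = c1 * c2"
  shows "sv_weight n a1 a2 b1 b2 c1 c2 \<sigma> = sv_weight n a1 a2 b1 b2 c c \<sigma>"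
  using assms
  by (simp add: sv_weight_factor_c[of _ _ _ _ _ c1 c2] sv_weight_factor_c[of _ _ _ _ _ c c]
    card_type5_eq_card_type6 mult.assoc power_mult_distrib[symmetric])

lemma sv_prob_Delta_zero:
  assumes pos: "a1 > 0" "a2 > 0" "b1 > 0" "b2 > 0" "c1 > 0" "c2 > 0"
    and Delta: "Delta a1 a2 b1 b2 c1 c2 = 0"
  shows "\<exists>\<alpha> \<beta> \<gamma> :: real. \<alpha> > 0 \<and> \<beta> > 0 \<and> \<gamma> > 0 \<and> \<gamma>^2 - \<alpha> * \<beta> > 0 \<and>
    (\<forall>\<sigma>\<in>SV n. sv_prob n a1 a2 b1 b2 c1 c2 \<sigma> = sv_prob n 1 (\<gamma>^2 - \<alpha> * \<beta>) \<beta> \<alpha> \<gamma> \<gamma> \<sigma>)"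
proof -
  define c where "c = sqrt (c1 * c2)"
  define \<alpha> \<beta> \<gamma> where "\<alpha> = b2 / a1" and "\<beta> = b1 / a1" and "\<gamma> = c / a1"
  have cc: "c * c = c1 * c2" using pos by (simp add: c_def)
  have "a1 * a2 + b1 * b2 = c1 * c2" using Delta pos by (simp add: Delta_def)
  then have a2: "\<gamma>^2 - \<alpha> * \<beta> = a2 / a1"
    using pos cc by (simp add: \<alpha>_def \<beta>_def \<gamma>_def power2_eq_square field_simps)
      (simp add: distrib_left[symmetric])
  have w: "sv_weight n a1 a2 b1 b2 c1 c2 \<sigma>
      = a1 ^ card (tor n) * sv_weight n 1 (\<gamma>^2 - \<alpha> * \<beta>) \<beta> \<alpha> \<gamma> \<gamma> \<sigma>" if "\<sigma> \<in> SV n" for \<sigma>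
    unfolding a2 using sv_weight_c_geometric_mean[OF that cc] sv_weight_scale[of a1] pos
    by (simp add: \<alpha>_def \<beta>_def \<gamma>_def)
  then have "sv_Z n a1 a2 b1 b2 c1 c2 = a1 ^ card (tor n) * sv_Z n 1 (\<gamma>^2 - \<alpha> * \<beta>) \<beta> \<alpha> \<gamma> \<gamma>"
    unfolding sv_Z_def sum_distrib_left by (intro sum.cong) simp_all
  then have "\<forall>\<sigma>\<in>SV n. sv_prob n a1 a2 b1 b2 c1 c2 \<sigma> = sv_prob n 1 (\<gamma>^2 - \<alpha> * \<beta>) \<beta> \<alpha> \<gamma> \<gamma> \<sigma>"
    using w pos by (simp add: sv_prob_def)
  moreover have "\<alpha> > 0" "\<beta> > 0" "\<gamma> > 0" "\<gamma>^2 - \<alpha> * \<beta> > 0"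
    using pos a2 by (simp_all add: \<alpha>_def \<beta>_def \<gamma>_def c_def)
  ultimately show ?thesis by blast
qed

end

theorem theorem2p3:
  fixes \<alpha> \<beta> \<gamma> :: real and n :: nat
  assumes "\<alpha> > 0" "\<beta> > 0" "\<gamma> > 0" "\<gamma>^2 - \<alpha> * \<beta> > 0" "n \<ge> 2"
  shows "Delta 1 (\<gamma>^2 - \<alpha> * \<beta>) \<beta> \<alpha> \<gamma> \<gamma> = 0
    \<and> (\<forall>\<rho>\<in>Snk n. (\<Sum>\<rho>b\<in>{\<rho>b\<in>GS n. sh n \<rho>b = \<rho>}. wbar n \<alpha> \<beta> \<gamma> \<rho>b)
                   = sv_weight n 1 (\<gamma>^2 - \<alpha> * \<beta>) \<beta> \<alpha> \<gamma> \<gamma> (Phi_inv n \<rho>))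
    \<and> (\<forall>\<sigma>\<in>SV n. (\<Sum>\<rho>b\<in>{\<rho>b\<in>GS n. SH n \<rho>b = \<sigma>}. PGS n \<alpha> \<beta> \<gamma> \<rho>b)
                   = sv_prob n 1 (\<gamma>^2 - \<alpha> * \<beta>) \<beta> \<alpha> \<gamma> \<gamma> \<sigma>)
    \<and> (\<forall>a1 a2 b1 b2 c1 c2 :: real.
         a1 > 0 \<and> a2 > 0 \<and> b1 > 0 \<and> b2 > 0 \<and> c1 > 0 \<and> c2 > 0
         \<and> Delta a1 a2 b1 b2 c1 c2 = 0 \<longrightarrow>
         (\<exists>\<alpha>' \<beta>' \<gamma>' :: real. \<alpha>' > 0 \<and> \<beta>' > 0 \<and> \<gamma>' > 0 \<and> \<gamma>'^2 - \<alpha>' * \<beta>' > 0 \<and>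
            (\<forall>\<sigma>\<in>SV n. sv_prob n a1 a2 b1 b2 c1 c2 \<sigma>
                        = sv_prob n 1 (\<gamma>'^2 - \<alpha>' * \<beta>') \<beta>' \<alpha>' \<gamma>' \<gamma>' \<sigma>)))"
proof -
  interpret torus n using assms(5) by unfold_locales
  show ?thesis
    by (intro conjI ballI allI impI Delta_snake_weights sum_wbar_sh_fiber sum_PGS_SH_fiber)
      (blast intro: sv_prob_Delta_zero)+
qed

end
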